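(* Consider $n$ bosonic modes with drift matrix $A$ (satisfying $A+A^{\sf T}<0$) and diffusion matrix $D$ (with strictly positive eigenvalues), continuously monitored by a general-dyne measurement. Let $\sigma_c$ be a conditional steady-state covariance matrix obtainable in this setting, i.e. a real symmetric $2n\times 2n$ matrix with $\sigma_c+i\Omega\ge0$ and $A\sigma_c+\sigma_c A^{\sf T}+D\ge 0$. Let $\lambda^{\downarrow}_1\ge\lambda^{\downarrow}_2$ be the two largest eigenvalues of $\sigma_c$, let $\alpha^{\uparrow}_1\le\alpha^{\uparrow}_2\le\dots$ be the (strictly positive) eigenvalues of $-(A+A^{\sf T})$ in increasing order, and let $\delta^{\downarrow}_1\ge\delta^{\downarrow}_2\ge\dots$ be the eigenvalues of $D$ in decreasing order. Then $$\lambda^{\downarrow}_1\lambda^{\downarrow}_2\le\frac{(\delta^{\downarrow}_1+\delta^{\downarrow}_2)^2}{4\,\alpha^{\uparrow}_1\alpha^{\uparrow}_2}.$$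
   Context: Setting: $n$ bosonic modes with canonical operators $\hat{\mathbf R}=(\hat x_1,\hat p_1,\dots,\hat x_n,\hat p_n)^{\sf T}$, $[\hat R_j,\hat R_k]=i\Omega_{jk}$, $\Omega=\bigoplus_{j=1}^n\begin{pmatrix}0&1\\-1&0\end{pmatrix}$. The covariance matrix (CM) of a state $\varrho$ is $\sigma_{jk}=\mathrm{Tr}(\{\hat R_j,\hat R_k\}\varrho)-2\mathrm{Tr}(\hat R_j\varrho)\mathrm{Tr}(\hat R_k\varrho)$. The system evolves by the Lindblad master equation $\dot\varrho=-i[\hat H,\varrho]+\sum_{j=1}^L\mathcal D[\hat c_j]\varrho$, with $\hat H=\frac12\hat{\mathbf R}^{\sf T}H\hat{\mathbf R}$ ($H$ real symmetric), $\hat{\mathbf c}=\widetilde C\hat{\mathbf R}$ ($\widetilde C$ a complex $L\times 2n$ matrix), $\mathcal D[O]\varrho=O\varrho O^\dagger-\frac12(O^\dagger O\varrho+\varrho O^\dagger O)$. The drift matrix is $A=\Omega(H+\mathrm{Im}[\widetilde C^\dagger\widetilde C])$ and the diffusion matrix is $D=2\Omega\,\mathrm{Re}[\widetilde C^\dagger\widetilde C]\Omega^{\sf T}$, so that without monitoring $\dot\sigma=A\sigma+\sigma A^{\sf T}+D$. Under continuous general-dyne monitoring of the environment (any diffusive Gaussian unravelling), the conditional CM $\sigma_c$ evolves deterministically, and a CM $\sigma_c$ is obtainable as a stabilising steady-state conditional CM for some general-dyne unravelling if and only if $\sigma_c+i\Omega\ge0$ and $A\sigma_c+\sigma_cA^{\sf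 T}+D\ge0$. *)

theory Defs
  imports "Jordan_Normal_Form.Char_Poly"
begin

text \<open>Symplectic form on 2n modes, ordering (x_1,p_1,...,x_n,p_n), indices 0-based:
  Omega_{2i,2i+1} = 1, Omega_{2i+1,2i} = -1.\<close>
definition Omega :: "nat \<Rightarrow> real mat" where
  "Omega n = mat (2*n) (2*n) (\<lambda>(j,k).
     if even j \<and> k = j + 1 then 1 else if odd j \<and> j = k + 1 then -1 else 0)"

definition real_psd :: "real mat \<Rightarrow> bool" where
  "real_psd M \<longleftrightarrow> M \<in> carrier_mat (dim_row M) (dim_row M) \<and> M\<^sup>T = M \<and>
     (\<forall>v \<in> carrier_vec (dim_row M). v \<bullet> (M *\<^sub>v v) \<ge> 0)"

definition real_negdef :: "real mat \<Rightarrow> bool" where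
  "real_negdef M \<longleftrightarrow> M \<in> carrier_mat (dim_row M) (dim_row M) \<and> M\<^sup>T = M \<and>
     (\<forall>v \<in> carrier_vec (dim_row M). v \<noteq> 0\<^sub>v (dim_row M) \<longrightarrow> v \<bullet> (M *\<^sub>v v) < 0)"

definition complex_psd :: "complex mat \<Rightarrow> bool" where
  "complex_psd M \<longleftrightarrow> M \<in> carrier_mat (dim_row M) (dim_row M) \<and>
     (\<forall>v \<in> carrier_vec (dim_row M).
        Im (conjugate v \<bullet> (M *\<^sub>v v)) = 0 \<and> Re (conjugate v \<bullet> (M *\<^sub>v v)) \<ge> 0)"

definition eigenvalue_list :: "real mat \<Rightarrow> real list \<Rightarrow> bool" where
  "eigenvalue_list M es \<longleftrightarrow> length es = dim_row M \<and>
     char_poly M = (\<Prod>e\<leftarrow>es. [:- e, 1:])"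

end

theory Submission
  imports Defs
begin

text \<open>Let v1, v2 be orthonormal eigenvectors of \<sigma> for its two largest eigenvalues \<lambda>1, \<lambda>2,
  and a_i = v_i^T M v_i with M = -(A + A^T). Testing the positive semidefinite matrix
  A\<sigma> + \<sigma>A^T + D against v_i gives \<lambda>_i a_i \<le> v_i^T D v_i, so Ky Fan's maximum principle yields
  \<lambda>1 a1 + \<lambda>2 a2 \<le> \<delta>1 + \<delta>2. Since \<sigma> + i\<Omega> \<ge> 0 forces \<sigma> \<ge> 0, the \<lambda>_i are nonnegative and AM-GM
  gives 4 \<lambda>1 \<lambda>2 a1 a2 \<le> (\<delta>1 + \<delta>2)^2. Finally Ky Fan's minimum principle for M
  (a_i \<ge> \<alpha>1 and a1 + a2 \<ge> \<alpha>1 + \<alpha>2) gives a1 a2 \<ge> \<alpha>1 \<alpha>2. The spectral theorem for real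
  symmetric matrices used throughout is proved by Householder deflation.\<close>

lemma sprod_self_eq_sum_squares:
  fixes v :: "real vec"
  assumes "v \<in> carrier_vec n"
  shows "v \<bullet> v = (\<Sum>i<n. (v $ i)\<^sup>2)"
  using assms by (simp add: scalar_prod_def power2_eq_square atLeast0LessThan)

definition householder_mat :: "nat \<Rightarrow> real vec \<Rightarrow> real mat" where
  "householder_mat n w = mat n n (\<lambda>(i,j). (if i = j then 1 else 0) - 2 / (w \<bullet> w) * w $ i * w $ j)"

lemma householder_mat_carrier: "householder_mat n w \<in> carrier_mat n n"
  by (simp add: householder_mat_def)

lemma householder_mat_symmetric: "(householder_mat n w)\<^sup>T = householder_mat n w"
  by (rule eq_matI) (auto simp: householder_mat_def)

lemma householder_mat_involution:
  assumes w: "w \<in> carrier_vec n" and w0: "w \<noteq> 0\<^sub>v n"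
  shows "householder_mat n w * householder_mat n w = 1\<^sub>m n"
proof (rule eq_matI)
  let ?H = "householder_mat n w"
  define c where "c = 2 / (w \<bullet> w)"
  have cs: "c * (w \<bullet> w) = 2" using conjugate_square_greater_0_vec[OF w] w0 by (simp add: c_def)
  have H: "?H $$ (i,j) = (if i = j then 1 else 0) - c * w $ i * w $ j" if "i < n" "j < n" for i j
    using that by (simp add: householder_mat_def c_def)
  fix i j assume i: "i < dim_row (1\<^sub>m n)" and j: "j < dim_col (1\<^sub>m n)"
  have "(?H * ?H) $$ (i,j) = (\<Sum>k<n. ?H $$ (i,k) * ?H $$ (k,j))"
    using i j householder_mat_carrier[of n w] by (simp add: scalar_prod_def atLeast0LessThan)
  also have "\<dots> = (\<Sum>k<n. (if i = k then (if k = j then 1 else 0) else 0)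
     - (if i = k then c * w $ k * w $ j else 0) - (if k = j then c * w $ i * w $ k else 0)
     + c * c * w $ i * w $ j * (w $ k)\<^sup>2)"
    using i j by (intro sum.cong) (auto simp: H algebra_simps power2_eq_square)
  also have "\<dots> = (if i = j then 1 else 0) - 2 * c * w $ i * w $ j + c * (c * (w \<bullet> w)) * w $ i * w $ j"
    using i j by (simp add: sum.distrib sum_subtractf sum_distrib_left[symmetric] sprod_self_eq_sum_squares[OF w])
  also have "\<dots> = 1\<^sub>m n $$ (i,j)" using i j cs by simp
  finally show "(?H * ?H) $$ (i,j) = 1\<^sub>m n $$ (i,j)" .
qed (auto simp: householder_mat_def)

lemma householder_reflection_exists:
  fixes u :: "real vec"
  assumes u: "u \<in> carrier_vec n" and uu: "u \<bullet> u = 1" and n: "0 < n"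
  shows "\<exists>H \<in> carrier_mat n n. H\<^sup>T = H \<and> H * H = 1\<^sub>m n \<and> H *\<^sub>v unit_vec n 0 = u"
proof (cases "u = unit_vec n 0")
  case True
  then show ?thesis by (intro bexI[of _ "1\<^sub>m n"]) auto
next
  case False
  define w where "w = u - unit_vec n 0"
  have w: "w \<in> carrier_vec n" using u by (simp add: w_def)
  have "u $ i = unit_vec n 0 $ i" if "w = 0\<^sub>v n" "i < n" for i
    using arg_cong[OF that(1), of "\<lambda>v. v $ i"] u that(2) by (simp add: w_def)
  then have w0: "w \<noteq> 0\<^sub>v n" using False u by (metis eq_vecI carrier_vecD index_unit_vec(3))
  have "w \<bullet> w = (\<Sum>i<n. (u $ i)\<^sup>2 - 2 * (if i = 0 then u $ i else 0) + (if i = 0 then 1 else 0))"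
    unfolding sprod_self_eq_sum_squares[OF w]
    by (rule sum.cong) (use u in \<open>auto simp: w_def power2_eq_square algebra_simps\<close>)
  also have "\<dots> = 2 * (1 - u $ 0)"
    using n uu by (simp add: sum.distrib sum_subtractf sum_distrib_left[symmetric] sprod_self_eq_sum_squares[OF u])
  finally have ww: "w \<bullet> w = 2 * (1 - u $ 0)" .
  then have c: "2 / (w \<bullet> w) * w $ 0 = -1"
    using n u conjugate_square_greater_0_vec[OF w] w0 by (simp add: w_def field_simps)
  have "(householder_mat n w *\<^sub>v unit_vec n 0) $ i = u $ i" if "i < n" for i
  proof -
    have "(householder_mat n w *\<^sub>v unit_vec n 0) $ i = (if i = 0 then 1 else 0) - 2 / (w \<bullet> w) * w $ 0 * w $ i"
      using that n by (simp add: householder_mat_def)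
    also have "\<dots> = (if i = 0 then 1 else 0) + w $ i" by (simp only: c)
    finally show ?thesis using that u by (simp add: w_def)
  qed
  then have "householder_mat n w *\<^sub>v unit_vec n 0 = u"
    using u householder_mat_carrier[of n w] by (intro eq_vecI) auto
  then show ?thesis
    using householder_mat_carrier householder_mat_symmetric householder_mat_involution[OF w w0] by blast
qed

lemma symmetric_mat_deflation:
  fixes M :: "real mat"
  assumes M: "M \<in> carrier_mat (Suc m) (Suc m)" and Msym: "M\<^sup>T = M" and e: "eigenvalue M e"
  shows "\<exists>H \<in> carrier_mat (Suc m) (Suc m). \<exists>A3 \<in> carrier_mat m m.
    H\<^sup>T = H \<and> H * H = 1\<^sub>m (Suc m) \<and> A3\<^sup>T = A3 \<and>
    H * M * H = four_block_mat (mat 1 1 (\<lambda>_. e)) (0\<^sub>m 1 m) (0\<^sub>m m 1) A3"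
proof -
  let ?n = "Suc m"
  from e obtain v where v: "v \<in> carrier_vec ?n" and v0: "v \<noteq> 0\<^sub>v ?n" and Mv: "M *\<^sub>v v = e \<cdot>\<^sub>v v"
    using M unfolding eigenvalue_def eigenvector_def by auto
  have vv: "v \<bullet> v > 0" using conjugate_square_greater_0_vec[OF v] v0 by simp
  define u where "u = (1 / sqrt (v \<bullet> v)) \<cdot>\<^sub>v v"
  have u: "u \<in> carrier_vec ?n" using v by (simp add: u_def)
  have uu: "u \<bullet> u = 1" using v vv by (simp add: u_def real_sqrt_mult[symmetric])
  have Mu: "M *\<^sub>v u = e \<cdot>\<^sub>v u" unfolding u_def
    by (simp add: mult_mat_vec[OF M v] Mv smult_smult_assoc mult.commute)
  obtain H where H: "H \<in> carrier_mat ?n ?n" and Hsym: "H\<^sup>T = H"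
    and HH: "H * H = 1\<^sub>m ?n" and He: "H *\<^sub>v unit_vec ?n 0 = u"
    using householder_reflection_exists[OF u uu] by auto
  have Hu: "H *\<^sub>v u = unit_vec ?n 0"
    using He[symmetric] H HH by (simp flip: assoc_mult_mat_vec)
  define A' where "A' = H * M * H"
  have A': "A' \<in> carrier_mat ?n ?n" using H M by (simp add: A'_def)
  have "A'\<^sup>T = H\<^sup>T * (H * M)\<^sup>T"
    unfolding A'_def by (rule transpose_mult) (use H M in auto)
  also have "(H * M)\<^sup>T = M\<^sup>T * H\<^sup>T"
    by (rule transpose_mult) (use H M in auto)
  finally have A'sym: "A'\<^sup>T = A'" using Hsym Msym H M by (simp add: A'_def)
  have "A' *\<^sub>v unit_vec ?n 0 = H *\<^sub>v (M *\<^sub>v (H *\<^sub>v unit_vec ?n 0))"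
    unfolding A'_def using H M
    by (simp add: assoc_mult_mat_vec[of "H * M" ?n ?n H ?n] assoc_mult_mat_vec[of H ?n ?n M ?n] del: assoc_mult_mat)
  also have "\<dots> = e \<cdot>\<^sub>v unit_vec ?n 0" unfolding He Mu mult_mat_vec[OF H u] Hu ..
  finally have A'e: "A' *\<^sub>v unit_vec ?n 0 = e \<cdot>\<^sub>v unit_vec ?n 0" .
  have col0: "A' $$ (i,0) = (if i = 0 then e else 0)" if "i < ?n" for i
    using arg_cong[OF A'e, of "\<lambda>x. x $ i"] that A' by simp
  have row0: "A' $$ (0,j) = (if j = 0 then e else 0)" if "j < ?n" for j
    using arg_cong[OF A'sym, of "\<lambda>X. X $$ (j,0)"] col0[OF that] that A' by simp
  define A3 where "A3 = mat m m (\<lambda>(i,j). A' $$ (Suc i, Suc j))"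
  have A3: "A3 \<in> carrier_mat m m" by (simp add: A3_def)
  have "A3\<^sup>T = A3"
  proof (rule eq_matI)
    fix i j assume "i < dim_row A3" "j < dim_col A3"
    then show "A3\<^sup>T $$ (i,j) = A3 $$ (i,j)"
      using arg_cong[OF A'sym, of "\<lambda>X. X $$ (Suc j, Suc i)"] A' by (simp add: A3_def)
  qed (auto simp: A3_def)
  moreover have "A' = four_block_mat (mat 1 1 (\<lambda>_. e)) (0\<^sub>m 1 m) (0\<^sub>m m 1) A3"
    by (rule eq_matI) (use A' col0 row0 in \<open>auto simp: A3_def\<close>)
  ultimately show ?thesis using H Hsym HH A3 unfolding A'_def by blast
qed

lemma orthogonal_conj_four_block:
  fixes P3 A3 E :: "real mat"
  assumes P3: "P3 \<in> carrier_mat m m" and P3P3: "P3\<^sup>T * P3 = 1\<^sub>m m"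
    and E: "E \<in> carrier_mat 1 1" and A3: "A3 \<in> carrier_mat m m"
  defines "B \<equiv> four_block_mat (1\<^sub>m 1) (0\<^sub>m 1 m) (0\<^sub>m m 1) P3"
  shows "B\<^sup>T * B = 1\<^sub>m (Suc m)"
    and "B\<^sup>T * four_block_mat E (0\<^sub>m 1 m) (0\<^sub>m m 1) A3 * B
       = four_block_mat E (0\<^sub>m 1 m) (0\<^sub>m m 1) (P3\<^sup>T * A3 * P3)"
proof -
  have BT: "B\<^sup>T = four_block_mat (1\<^sub>m 1) (0\<^sub>m 1 m) (0\<^sub>m m 1) P3\<^sup>T"
    unfolding B_def using P3 by (subst transpose_four_block_mat) auto
  show "B\<^sup>T * B = 1\<^sub>m (Suc m)"
    unfolding BT unfolding B_def using P3 P3P3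
    by (subst mult_four_block_mat[of _ 1 1 _ m _ m]) auto
  have left: "B\<^sup>T * four_block_mat E (0\<^sub>m 1 m) (0\<^sub>m m 1) A3 = four_block_mat E (0\<^sub>m 1 m) (0\<^sub>m m 1) (P3\<^sup>T * A3)"
    unfolding BT by (subst mult_four_block_mat[of _ 1 1 _ m _ m]) (use P3 A3 E in auto)
  show "B\<^sup>T * four_block_mat E (0\<^sub>m 1 m) (0\<^sub>m m 1) A3 * B
       = four_block_mat E (0\<^sub>m 1 m) (0\<^sub>m m 1) (P3\<^sup>T * A3 * P3)"
    unfolding left unfolding B_def by (subst mult_four_block_mat[of _ 1 1 _ m _ m]) (use P3 A3 E in auto)
qed

lemma orthogonal_diagonalization:
  fixes M :: "real mat"
  assumes "M \<in> carrier_mat n n" "M\<^sup>T = M" "char_poly M = (\<Prod>e\<leftarrow>es. [:-e,1:])"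
  shows "\<exists>P \<in> carrier_mat n n. P\<^sup>T * P = 1\<^sub>m n \<and> P\<^sup>T * M * P = mat_diag n (\<lambda>i. es ! i)"
  using assms
proof (induction es arbitrary: n M)
  case Nil
  have "n = 0" using degree_monic_char_poly[OF Nil(1)] Nil(3) by simp
  then show ?case using Nil(1) by (intro bexI[of _ "1\<^sub>m 0"]) (auto simp: mat_diag_def)
next
  case (Cons e es n M)
  note M = Cons(2)
  have cp: "char_poly M = [:-e,1:] * (\<Prod>e\<leftarrow>es. [:-e,1:])" using Cons(4) by simp
  have "degree (char_poly M) = n" using degree_monic_char_poly[OF M] by simp
  then have "n \<noteq> 0" unfolding cp by (subst (asm) degree_mult_eq) (auto simp: monic_prod_list)
  then obtain m where n: "n = Suc m" by (cases n) auto
  have "eigenvalue M e" unfolding eigenvalue_root_char_poly[OF M] cp by simp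
  then obtain H A3 where H: "H \<in> carrier_mat n n" and Hsym: "H\<^sup>T = H" and HH: "H * H = 1\<^sub>m n"
    and A3: "A3 \<in> carrier_mat m m" and A3sym: "A3\<^sup>T = A3"
    and HMH: "H * M * H = four_block_mat (mat 1 1 (\<lambda>_. e)) (0\<^sub>m 1 m) (0\<^sub>m m 1) A3"
    using symmetric_mat_deflation[of M m e] M Cons(3) unfolding n by blast
  have E: "mat 1 1 (\<lambda>_. e) \<in> carrier_mat 1 1" by simp
  have "similar_mat_wit (H * M * H) M H H"
    by (rule similar_mat_witI[of _ _ n]) (use HH H M in auto)
  then have "char_poly M = char_poly (H * M * H)"
    by (intro char_poly_similar[symmetric]) (auto simp: similar_mat_def)
  also have "\<dots> = [:-e,1:] * char_poly A3"
    unfolding HMH by (subst char_poly_four_block_zeros_col[OF E _ A3])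
      (auto simp: char_poly_defs det_def sign_def)
  finally have "char_poly A3 = (\<Prod>e\<leftarrow>es. [:-e,1:])" unfolding cp
    by (metis mult_cancel_left pCons_eq_0_iff zero_neq_one)
  from Cons(1)[OF A3 A3sym this] obtain P3 where P3: "P3 \<in> carrier_mat m m"
    and P3P3: "P3\<^sup>T * P3 = 1\<^sub>m m" and P3A3: "P3\<^sup>T * A3 * P3 = mat_diag m (\<lambda>i. es ! i)" by auto
  define B where "B = four_block_mat (1\<^sub>m 1) (0\<^sub>m 1 m) (0\<^sub>m m 1) P3"
  have B: "B \<in> carrier_mat n n"
    using four_block_carrier_mat[OF one_carrier_mat[of 1] P3] n by (simp add: B_def)
  have BT: "B\<^sup>T \<in> carrier_mat n n" using B by simp
  have PT: "(H * B)\<^sup>T = B\<^sup>T * H"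
    using H B Hsym by (simp add: transpose_mult[of _ n n])
  have "(H * B)\<^sup>T * (H * B) = B\<^sup>T * (H * H) * B"
    unfolding PT using H B BT by (simp add: assoc_mult_mat[of _ n n _ n _ n])
  also have "\<dots> = B\<^sup>T * B" using HH BT by simp
  also have "\<dots> = 1\<^sub>m n"
    using orthogonal_conj_four_block(1)[OF P3 P3P3 E A3] unfolding n B_def .
  finally have "(H * B)\<^sup>T * (H * B) = 1\<^sub>m n" .
  moreover have "(H * B)\<^sup>T * M * (H * B) = B\<^sup>T * (H * M * H) * B"
    unfolding PT using H B BT M by (simp add: assoc_mult_mat[of _ n n _ n _ n])
  moreover have "B\<^sup>T * (H * M * H) * B = mat_diag n (\<lambda>i. (e # es) ! i)"
    unfolding HMH B_def orthogonal_conj_four_block(2)[OF P3 P3P3 E A3] P3A3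
    by (rule eq_matI) (auto simp: n mat_diag_def)
  ultimately show ?case using H B by (intro bexI[of _ "H * B"]) auto
qed

lemma mat_diag_mult_vec:
  "y \<in> carrier_vec n \<Longrightarrow> mat_diag n f *\<^sub>v y = vec n (\<lambda>k. f k * y $ k)"
proof (rule eq_vecI)
  fix i assume y: "y \<in> carrier_vec n" and "i < dim_vec (vec n (\<lambda>k. f k * y $ k))"
  then have i: "i < n" by simp
  have "(mat_diag n f *\<^sub>v y) $ i = (\<Sum>k\<in>{0..<n}. (if i = k then f k else 0) * y $ k)"
    using i y by (simp add: mat_diag_def scalar_prod_def)
  also have "\<dots> = (\<Sum>k\<in>{0..<n}. (if k = i then f i * y $ i else 0))"
    by (rule sum.cong) auto
  finally show "(mat_diag n f *\<^sub>v y) $ i = vec n (\<lambda>k. f k * y $ k) $ i" using i by simp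
qed (auto simp: mat_diag_def)

lemma symmetric_eigen_decomposition:
  fixes M :: "real mat"
  assumes M: "M \<in> carrier_mat n n" and Msym: "M\<^sup>T = M" and es: "eigenvalue_list M es"
  shows "\<exists>P \<in> carrier_mat n n. P\<^sup>T * P = 1\<^sub>m n \<and> P * P\<^sup>T = 1\<^sub>m n \<and>
     (\<forall>k<n. M *\<^sub>v (P *\<^sub>v unit_vec n k) = es ! k \<cdot>\<^sub>v (P *\<^sub>v unit_vec n k)) \<and>
     (\<forall>x \<in> carrier_vec n. x \<bullet> (M *\<^sub>v x) = (\<Sum>k<n. es ! k * ((P\<^sup>T *\<^sub>v x) $ k)\<^sup>2))"
proof -
  obtain P where P: "P \<in> carrier_mat n n" and PP: "P\<^sup>T * P = 1\<^sub>m n"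
    and PMP: "P\<^sup>T * M * P = mat_diag n (\<lambda>i. es ! i)"
    using orthogonal_diagonalization[OF M Msym] es unfolding eigenvalue_list_def by blast
  let ?\<Lambda> = "mat_diag n (\<lambda>i. es ! i)"
  have PT: "P\<^sup>T \<in> carrier_mat n n" using P by simp
  have PP': "P * P\<^sup>T = 1\<^sub>m n" by (rule mat_mult_left_right_inverse[OF PT P PP])
  have "P * ?\<Lambda> * P\<^sup>T = (P * P\<^sup>T) * M * (P * P\<^sup>T)"
    unfolding PMP[symmetric] using P PT M by (simp add: assoc_mult_mat[of _ n n _ n _ n])
  then have M_eq: "M = P * ?\<Lambda> * P\<^sup>T" using PP' M by simp
  have Mx: "M *\<^sub>v x = P *\<^sub>v (?\<Lambda> *\<^sub>v (P\<^sup>T *\<^sub>v x))" if "x \<in> carrier_vec n" for x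
    unfolding M_eq using P PT that
    by (simp add: assoc_mult_mat_vec[of "P * ?\<Lambda>" n n _ n] assoc_mult_mat_vec[of P n n _ n] del: assoc_mult_mat)
  have "M *\<^sub>v (P *\<^sub>v unit_vec n k) = es ! k \<cdot>\<^sub>v (P *\<^sub>v unit_vec n k)" if k: "k < n" for k
  proof -
    have "P\<^sup>T *\<^sub>v (P *\<^sub>v unit_vec n k) = unit_vec n k"
      using P PT PP by (simp flip: assoc_mult_mat_vec[of _ n n _ n])
    moreover have "?\<Lambda> *\<^sub>v unit_vec n k = es ! k \<cdot>\<^sub>v unit_vec n k"
      by (rule eq_vecI) (use k in \<open>auto simp: mat_diag_mult_vec\<close>)
    ultimately show ?thesis using Mx[of "P *\<^sub>v unit_vec n k"] P by (simp add: mult_mat_vec[OF P])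
  qed
  moreover have "x \<bullet> (M *\<^sub>v x) = (\<Sum>k<n. es ! k * ((P\<^sup>T *\<^sub>v x) $ k)\<^sup>2)" if x: "x \<in> carrier_vec n" for x
  proof -
    define y where "y = P\<^sup>T *\<^sub>v x"
    have y: "y \<in> carrier_vec n" using PT x by (simp add: y_def)
    have "?\<Lambda> *\<^sub>v y \<in> carrier_vec n" using mult_mat_vec_carrier[OF mat_diag_dim y] .
    then have "x \<bullet> (M *\<^sub>v x) = y \<bullet> (?\<Lambda> *\<^sub>v y)"
      unfolding Mx[OF x] y_def[symmetric] using transpose_vec_mult_scalar[OF P _ x] by (simp add: y_def)
    also have "\<dots> = (\<Sum>k<n. es ! k * (y $ k)\<^sup>2)"
      using y by (simp add: mat_diag_mult_vec scalar_prod_def atLeast0LessThan power2_eq_square ac_simps)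
    finally show ?thesis unfolding y_def .
  qed
  ultimately show ?thesis using P PP PP' by blast
qed

lemma orthogonal_mat_columns_orthonormal:
  fixes P :: "real mat"
  assumes P: "P \<in> carrier_mat n n" and PP: "P\<^sup>T * P = 1\<^sub>m n" and "i < n" "j < n"
  shows "(P *\<^sub>v unit_vec n i) \<bullet> (P *\<^sub>v unit_vec n j) = (if i = j then 1 else 0)"
proof -
  have "P\<^sup>T *\<^sub>v (P *\<^sub>v unit_vec n i) = unit_vec n i"
    using P PP by (simp flip: assoc_mult_mat_vec[of _ n n _ n])
  then show ?thesis
    using transpose_vec_mult_scalar[OF P unit_vec_carrier, of "P *\<^sub>v unit_vec n i" j] P assms(3,4)
    by (cases "i = j") auto
qed

lemma orthogonal_mat_transpose_sprod:
  fixes P :: "real mat"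
  assumes P: "P \<in> carrier_mat n n" and PP: "P * P\<^sup>T = 1\<^sub>m n"
    and x: "x \<in> carrier_vec n" and z: "z \<in> carrier_vec n"
  shows "(P\<^sup>T *\<^sub>v x) \<bullet> (P\<^sup>T *\<^sub>v z) = x \<bullet> z"
proof -
  have "(P\<^sup>T *\<^sub>v x) \<bullet> (P\<^sup>T *\<^sub>v z) = x \<bullet> (P *\<^sub>v (P\<^sup>T *\<^sub>v z))"
    using transpose_vec_mult_scalar[OF P _ x, of "P\<^sup>T *\<^sub>v z"] P z by simp
  also have "P *\<^sub>v (P\<^sup>T *\<^sub>v z) = z"
    using P PP z by (simp flip: assoc_mult_mat_vec[of _ n n _ n])
  finally show ?thesis .
qed

lemma orthonormal_pair_coord_sq_le_one:
  fixes y1 y2 :: "real vec"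
  assumes y1: "y1 \<in> carrier_vec n" and y2: "y2 \<in> carrier_vec n"
    and n1: "y1 \<bullet> y1 = 1" and n2: "y2 \<bullet> y2 = 1" and o: "y1 \<bullet> y2 = 0" and k: "k < n"
  shows "(y1 $ k)\<^sup>2 + (y2 $ k)\<^sup>2 \<le> 1"
proof -
  define a where "a = y1 $ k"
  define b where "b = y2 $ k"
  have s12: "(\<Sum>i<n. y1 $ i * y2 $ i) = 0" using o y2 by (simp add: scalar_prod_def atLeast0LessThan)
  \<comment> \<open>the squared distance from e_k to its projection onto the span of y1, y2\<close>
  have "0 \<le> (\<Sum>i<n. ((if i = k then 1 else 0) - a * y1 $ i - b * y2 $ i)\<^sup>2)" by (intro sum_nonneg) auto
  also have "\<dots> = (\<Sum>i<n. (if i = k then 1 - 2 * a * y1 $ i - 2 * b * y2 $ i else 0)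
      + a\<^sup>2 * (y1 $ i)\<^sup>2 + b\<^sup>2 * (y2 $ i)\<^sup>2 + 2 * a * b * (y1 $ i * y2 $ i))"
    by (rule sum.cong) (auto simp: power2_eq_square algebra_simps)
  also have "\<dots> = (1 - 2 * a * a - 2 * b * b) + a\<^sup>2 * (\<Sum>i<n. (y1 $ i)\<^sup>2) + b\<^sup>2 * (\<Sum>i<n. (y2 $ i)\<^sup>2)
      + 2 * a * b * (\<Sum>i<n. y1 $ i * y2 $ i)"
    using k by (simp add: sum.distrib sum_distrib_left a_def b_def)
  also have "\<dots> = 1 - a\<^sup>2 - b\<^sup>2"
    unfolding s12 sprod_self_eq_sum_squares[OF y1, symmetric] sprod_self_eq_sum_squares[OF y2, symmetric] n1 n2
    by (simp add: power2_eq_square)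
  finally show ?thesis unfolding a_def b_def by simp
qed

lemma unit_vec_quadratic_form_weights:
  fixes M :: "real mat"
  assumes M: "M \<in> carrier_mat n n" and Msym: "M\<^sup>T = M" and es: "eigenvalue_list M es"
    and x: "x \<in> carrier_vec n" and xx: "x \<bullet> x = 1"
  shows "\<exists>w. (\<forall>k<n. 0 \<le> w k) \<and> (\<Sum>k<n. w k) = 1 \<and> x \<bullet> (M *\<^sub>v x) = (\<Sum>k<n. es ! k * w k)"
proof -
  obtain P where P: "P \<in> carrier_mat n n" and PP: "P * P\<^sup>T = 1\<^sub>m n"
    and Mq: "\<forall>x \<in> carrier_vec n. x \<bullet> (M *\<^sub>v x) = (\<Sum>k<n. es ! k * ((P\<^sup>T *\<^sub>v x) $ k)\<^sup>2)"
    using symmetric_eigen_decomposition[OF M Msym es] by auto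
  have x': "P\<^sup>T *\<^sub>v x \<in> carrier_vec n" using P x by simp
  have "(\<Sum>k<n. ((P\<^sup>T *\<^sub>v x) $ k)\<^sup>2) = 1"
    using orthogonal_mat_transpose_sprod[OF P PP x x] xx unfolding sprod_self_eq_sum_squares[OF x'] by simp
  then show ?thesis using Mq x by (intro exI[of _ "\<lambda>k. ((P\<^sup>T *\<^sub>v x) $ k)\<^sup>2"]) auto
qed

lemma orthonormal_pair_quadratic_form_weights:
  fixes M :: "real mat"
  assumes M: "M \<in> carrier_mat n n" and Msym: "M\<^sup>T = M" and es: "eigenvalue_list M es"
    and x: "x \<in> carrier_vec n" and y: "y \<in> carrier_vec n"
    and xx: "x \<bullet> x = 1" and yy: "y \<bullet> y = 1" and xy: "x \<bullet> y = 0"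
  shows "\<exists>w. (\<forall>k<n. 0 \<le> w k \<and> w k \<le> 1) \<and> (\<Sum>k<n. w k) = 2 \<and>
    x \<bullet> (M *\<^sub>v x) + y \<bullet> (M *\<^sub>v y) = (\<Sum>k<n. es ! k * w k)"
proof -
  obtain P where P: "P \<in> carrier_mat n n" and PP: "P * P\<^sup>T = 1\<^sub>m n"
    and Mq: "\<forall>x \<in> carrier_vec n. x \<bullet> (M *\<^sub>v x) = (\<Sum>k<n. es ! k * ((P\<^sup>T *\<^sub>v x) $ k)\<^sup>2)"
    using symmetric_eigen_decomposition[OF M Msym es] by auto
  define x' where "x' = P\<^sup>T *\<^sub>v x"
  define y' where "y' = P\<^sup>T *\<^sub>v y"
  have x': "x' \<in> carrier_vec n" and y': "y' \<in> carrier_vec n"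
    using P x y by (simp_all add: x'_def y'_def)
  have x'x': "x' \<bullet> x' = 1" and y'y': "y' \<bullet> y' = 1" and x'y': "x' \<bullet> y' = 0"
    using orthogonal_mat_transpose_sprod[OF P PP] x y xx yy xy by (simp_all add: x'_def y'_def)
  have "\<forall>k<n. 0 \<le> (x' $ k)\<^sup>2 + (y' $ k)\<^sup>2 \<and> (x' $ k)\<^sup>2 + (y' $ k)\<^sup>2 \<le> 1"
    using orthonormal_pair_coord_sq_le_one[OF x' y' x'x' y'y' x'y'] by auto
  moreover have "(\<Sum>k<n. (x' $ k)\<^sup>2 + (y' $ k)\<^sup>2) = 2"
    using x'x' y'y' by (simp add: sum.distrib sprod_self_eq_sum_squares[OF x'] sprod_self_eq_sum_squares[OF y'])
  moreover have "x \<bullet> (M *\<^sub>v x) + y \<bullet> (M *\<^sub>v y) = (\<Sum>k<n. es ! k * ((x' $ k)\<^sup>2 + (y' $ k)\<^sup>2))"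
    using Mq x y unfolding x'_def y'_def by (simp add: sum.distrib distrib_left)
  ultimately show ?thesis by (intro exI[of _ "\<lambda>k. (x' $ k)\<^sup>2 + (y' $ k)\<^sup>2"]) simp
qed

lemma weighted_sum_le_top_two:
  fixes d w :: "nat \<Rightarrow> real"
  assumes n: "2 \<le> n" and d: "\<forall>k<n. 1 \<le> k \<longrightarrow> d k \<le> d 1" "d 1 \<le> d 0"
    and w: "\<forall>k<n. 0 \<le> w k \<and> w k \<le> 1" and sw: "(\<Sum>k<n. w k) = 2"
  shows "(\<Sum>k<n. d k * w k) \<le> d 0 + d 1"
proof -
  have "(\<Sum>k<n. d k * w k) \<le> (\<Sum>k<n. d 1 * w k + (if k = 0 then (d 0 - d 1) * w 0 else 0))"
  proof (rule sum_mono)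
    fix k assume k: "k \<in> {..<n}"
    show "d k * w k \<le> d 1 * w k + (if k = 0 then (d 0 - d 1) * w 0 else 0)"
    proof (cases "k = 0")
      case False
      then have "d k * w k \<le> d 1 * w k" using d w k by (intro mult_right_mono) auto
      then show ?thesis using False by simp
    qed (simp add: algebra_simps)
  qed
  also have "\<dots> = d 1 * 2 + (d 0 - d 1) * w 0"
    using n sw by (simp add: sum.distrib sum_distrib_left[symmetric])
  also have "\<dots> \<le> d 0 + d 1"
    using mult_left_mono[of "w 0" 1 "d 0 - d 1"] d w n by auto
  finally show ?thesis .
qed

lemma quadratic_form_pair_le_top_two:
  fixes M :: "real mat"
  assumes M: "M \<in> carrier_mat n n" and Msym: "M\<^sup>T = M" and es: "eigenvalue_list M es" "sorted_wrt (\<ge>) es"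
    and n: "2 \<le> n" and x: "x \<in> carrier_vec n" and y: "y \<in> carrier_vec n"
    and "x \<bullet> x = 1" "y \<bullet> y = 1" "x \<bullet> y = 0"
  shows "x \<bullet> (M *\<^sub>v x) + y \<bullet> (M *\<^sub>v y) \<le> es ! 0 + es ! 1"
proof -
  have len: "length es = n" using es(1) M unfolding eigenvalue_list_def by simp
  obtain w where w: "\<forall>k<n. 0 \<le> w k \<and> w k \<le> 1" "(\<Sum>k<n. w k) = 2"
    and eq: "x \<bullet> (M *\<^sub>v x) + y \<bullet> (M *\<^sub>v y) = (\<Sum>k<n. es ! k * w k)"
    using orthonormal_pair_quadratic_form_weights[OF M Msym es(1) x y] assms(8-10) by blast
  show ?thesis unfolding eq
  proof (rule weighted_sum_le_top_two[OF n _ _ w])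
    show "\<forall>k<n. 1 \<le> k \<longrightarrow> es ! k \<le> es ! 1"
      using es(2) len by (auto simp: sorted_wrt_iff_nth_less le_less)
    show "es ! 1 \<le> es ! 0" using es(2) len n by (auto simp: sorted_wrt_iff_nth_less)
  qed
qed

lemma quadratic_form_pair_ge_bottom_two:
  fixes M :: "real mat"
  assumes M: "M \<in> carrier_mat n n" and Msym: "M\<^sup>T = M" and es: "eigenvalue_list M es" "sorted es"
    and n: "2 \<le> n" and x: "x \<in> carrier_vec n" and y: "y \<in> carrier_vec n"
    and "x \<bullet> x = 1" "y \<bullet> y = 1" "x \<bullet> y = 0"
  shows "es ! 0 + es ! 1 \<le> x \<bullet> (M *\<^sub>v x) + y \<bullet> (M *\<^sub>v y)"
proof -
  have len: "length es = n" using es(1) M unfolding eigenvalue_list_def by simp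
  obtain w where w: "\<forall>k<n. 0 \<le> w k \<and> w k \<le> 1" "(\<Sum>k<n. w k) = 2"
    and eq: "x \<bullet> (M *\<^sub>v x) + y \<bullet> (M *\<^sub>v y) = (\<Sum>k<n. es ! k * w k)"
    using orthonormal_pair_quadratic_form_weights[OF M Msym es(1) x y] assms(8-10) by blast
  have "(\<Sum>k<n. - es ! k * w k) \<le> - es ! 0 + - es ! 1"
    by (rule weighted_sum_le_top_two[OF n _ _ w]) (use es(2) len n in \<open>auto simp: sorted_iff_nth_mono\<close>)
  then show ?thesis unfolding eq by (simp add: sum_negf)
qed

lemma quadratic_form_ge_least_eigenvalue:
  fixes M :: "real mat"
  assumes M: "M \<in> carrier_mat n n" and Msym: "M\<^sup>T = M" and es: "eigenvalue_list M es" "sorted es"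
    and x: "x \<in> carrier_vec n" and xx: "x \<bullet> x = 1"
  shows "es ! 0 \<le> x \<bullet> (M *\<^sub>v x)"
proof -
  have len: "length es = n" using es(1) M unfolding eigenvalue_list_def by simp
  obtain w where w: "\<forall>k<n. 0 \<le> w k" "(\<Sum>k<n. w k) = 1"
    and eq: "x \<bullet> (M *\<^sub>v x) = (\<Sum>k<n. es ! k * w k)"
    using unit_vec_quadratic_form_weights[OF M Msym es(1) x xx] by blast
  have "(\<Sum>k<n. es ! 0 * w k) \<le> (\<Sum>k<n. es ! k * w k)"
    by (rule sum_mono) (use es(2) len w in \<open>auto simp: sorted_iff_nth_mono intro: mult_right_mono\<close>)
  then show ?thesis unfolding eq by (simp add: sum_distrib_left[symmetric] w(2))
qed

lemma eigenvalue_list_pos_if_pos_def: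
  fixes M :: "real mat"
  assumes M: "M \<in> carrier_mat n n" and Msym: "M\<^sup>T = M" and es: "eigenvalue_list M es"
    and pos: "\<forall>v \<in> carrier_vec n. v \<noteq> 0\<^sub>v n \<longrightarrow> 0 < v \<bullet> (M *\<^sub>v v)" and k: "k < n"
  shows "0 < es ! k"
proof -
  obtain P where P: "P \<in> carrier_mat n n" and PP: "P\<^sup>T * P = 1\<^sub>m n"
    and ev: "\<forall>k<n. M *\<^sub>v (P *\<^sub>v unit_vec n k) = es ! k \<cdot>\<^sub>v (P *\<^sub>v unit_vec n k)"
    using symmetric_eigen_decomposition[OF M Msym es] by auto
  define u where "u = P *\<^sub>v unit_vec n k"
  have u: "u \<in> carrier_vec n" using P by (simp add: u_def)
  have uu: "u \<bullet> u = 1" using orthogonal_mat_columns_orthonormal[OF P PP k k] by (simp add: u_def)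
  then have "u \<noteq> 0\<^sub>v n" by auto
  then have "0 < u \<bullet> (M *\<^sub>v u)" using pos u by blast
  also have "M *\<^sub>v u = es ! k \<cdot>\<^sub>v u" using ev k by (simp add: u_def)
  also have "u \<bullet> (es ! k \<cdot>\<^sub>v u) = es ! k" using u uu by simp
  finally show ?thesis .
qed

lemma top_two_orthonormal_eigenvectors:
  fixes M :: "real mat"
  assumes M: "M \<in> carrier_mat n n" and Msym: "M\<^sup>T = M" and es: "eigenvalue_list M es" and n: "2 \<le> n"
  obtains x y where "x \<in> carrier_vec n" "y \<in> carrier_vec n" "x \<bullet> x = 1" "y \<bullet> y = 1" "x \<bullet> y = 0"
    "M *\<^sub>v x = es ! 0 \<cdot>\<^sub>v x" "M *\<^sub>v y = es ! 1 \<cdot>\<^sub>v y"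
proof -
  obtain P where P: "P \<in> carrier_mat n n" and PP: "P\<^sup>T * P = 1\<^sub>m n"
    and ev: "\<forall>k<n. M *\<^sub>v (P *\<^sub>v unit_vec n k) = es ! k \<cdot>\<^sub>v (P *\<^sub>v unit_vec n k)"
    using symmetric_eigen_decomposition[OF M Msym es] by auto
  let ?x = "P *\<^sub>v unit_vec n 0" and ?y = "P *\<^sub>v unit_vec n 1"
  show ?thesis
  proof (rule that)
    show "?x \<in> carrier_vec n" "?y \<in> carrier_vec n" using P by simp_all
    show "?x \<bullet> ?x = 1" "?y \<bullet> ?y = 1" "?x \<bullet> ?y = 0"
      using orthogonal_mat_columns_orthonormal[OF P PP] n by simp_all
    show "M *\<^sub>v ?x = es ! 0 \<cdot>\<^sub>v ?x" "M *\<^sub>v ?y = es ! 1 \<cdot>\<^sub>v ?y" using ev n by simp_all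
  qed
qed

lemma complex_psd_imp_real_part_psd:
  fixes S Om :: "real mat"
  assumes S: "S \<in> carrier_mat n n" and Om: "Om \<in> carrier_mat n n"
    and psd: "complex_psd (map_mat complex_of_real S + \<i> \<cdot>\<^sub>m map_mat complex_of_real Om)"
    and x: "x \<in> carrier_vec n"
  shows "0 \<le> x \<bullet> (S *\<^sub>v x)"
proof -
  let ?C = "map_mat complex_of_real S + \<i> \<cdot>\<^sub>m map_mat complex_of_real Om"
  define xc where "xc = map_vec complex_of_real x"
  have "0 \<le> Re (conjugate xc \<bullet> (?C *\<^sub>v xc))"
    using psd x S Om unfolding complex_psd_def by (auto simp: xc_def)
  \<comment> \<open>for real x the contribution of the term with \<i> is purely imaginary\<close>
  also have "Re (conjugate xc \<bullet> (?C *\<^sub>v xc)) = x \<bullet> (S *\<^sub>v x)"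
    using S Om x by (simp add: xc_def scalar_prod_def mult_mat_vec_def row_def sum_distrib_left algebra_simps)
  finally show ?thesis .
qed

lemma lyapunov_eigenvector_bound:
  fixes A S D :: "real mat"
  assumes A: "A \<in> carrier_mat n n" and S: "S \<in> carrier_mat n n" and D: "D \<in> carrier_mat n n"
    and Ssym: "S\<^sup>T = S" and psd: "real_psd (A * S + S * A\<^sup>T + D)"
    and v: "v \<in> carrier_vec n" and ev: "S *\<^sub>v v = l \<cdot>\<^sub>v v"
  shows "l * (v \<bullet> (- (A + A\<^sup>T) *\<^sub>v v)) \<le> v \<bullet> (D *\<^sub>v v)"
proof -
  have AT: "A\<^sup>T \<in> carrier_mat n n" using A by simp
  have "(A * S + S * A\<^sup>T + D) *\<^sub>v v = (A * S) *\<^sub>v v + (S * A\<^sup>T) *\<^sub>v v + D *\<^sub>v v"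
    using A S D AT v by (simp add: add_mult_distrib_mat_vec[of _ n n])
  also have "(A * S) *\<^sub>v v = l \<cdot>\<^sub>v (A *\<^sub>v v)" using A S v ev by (simp add: mult_mat_vec[OF A])
  also have "(S * A\<^sup>T) *\<^sub>v v = S *\<^sub>v (A\<^sup>T *\<^sub>v v)" using S AT v by simp
  finally have "v \<bullet> ((A * S + S * A\<^sup>T + D) *\<^sub>v v)
     = l * (v \<bullet> (A *\<^sub>v v)) + v \<bullet> (S *\<^sub>v (A\<^sup>T *\<^sub>v v)) + v \<bullet> (D *\<^sub>v v)"
    using A S D AT v by (simp add: scalar_prod_add_distrib[of _ n])
  also have "v \<bullet> (S *\<^sub>v (A\<^sup>T *\<^sub>v v)) = (S\<^sup>T *\<^sub>v v) \<bullet> (A\<^sup>T *\<^sub>v v)"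
    using transpose_vec_mult_scalar[OF S _ v, of "A\<^sup>T *\<^sub>v v"] AT v by simp
  also have "\<dots> = l * (v \<bullet> (A\<^sup>T *\<^sub>v v))" unfolding Ssym ev using v AT by simp
  also have "v \<bullet> (A *\<^sub>v v) = v \<bullet> ((A + A\<^sup>T) *\<^sub>v v) - v \<bullet> (A\<^sup>T *\<^sub>v v)"
    using A AT v by (simp add: add_mult_distrib_mat_vec[of _ n n] scalar_prod_add_distrib[of _ n])
  finally have "v \<bullet> ((A * S + S * A\<^sup>T + D) *\<^sub>v v) = l * (v \<bullet> ((A + A\<^sup>T) *\<^sub>v v)) + v \<bullet> (D *\<^sub>v v)"
    by (simp add: algebra_simps)
  moreover have "0 \<le> v \<bullet> ((A * S + S * A\<^sup>T + D) *\<^sub>v v)"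
    using psd v A D unfolding real_psd_def by auto
  moreover have "v \<bullet> (- (A + A\<^sup>T) *\<^sub>v v) = - (v \<bullet> ((A + A\<^sup>T) *\<^sub>v v))"
    using A v by simp
  ultimately show ?thesis by simp
qed

lemma product_le_of_weighted_sum_le:
  fixes l1 l2 a1 a2 b1 b2 S :: real
  assumes l: "0 \<le> l1" "0 \<le> l2" and a: "b1 \<le> a1" "b1 \<le> a2" "b1 + b2 \<le> a1 + a2"
    and b: "0 < b1" "b1 \<le> b2" and sum: "l1 * a1 + l2 * a2 \<le> S"
  shows "l1 * l2 \<le> S\<^sup>2 / (4 * b1 * b2)"
proof -
  have "a1 * a2 - b1 * b2 = b1 * ((a1 - b1) + (a2 - b1) - (b2 - b1)) + (a1 - b1) * (a2 - b1)"
    by (simp add: algebra_simps)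
  also have "\<dots> \<ge> 0" using a b by (intro add_nonneg_nonneg mult_nonneg_nonneg) auto
  finally have ab: "b1 * b2 \<le> a1 * a2" by simp
  have "4 * (l1 * a1) * (l2 * a2) \<le> (l1 * a1 + l2 * a2)\<^sup>2"
    using sum_squares_ge_zero[of "l1 * a1 - l2 * a2" 0] by (simp add: power2_eq_square algebra_simps)
  also have "\<dots> \<le> S\<^sup>2" using l a b sum by (intro power_mono) auto
  finally have "4 * (l1 * l2) * (a1 * a2) \<le> S\<^sup>2" by (simp add: algebra_simps)
  moreover have "4 * (l1 * l2) * (b1 * b2) \<le> 4 * (l1 * l2) * (a1 * a2)"
    using ab l by (intro mult_left_mono) auto
  ultimately show ?thesis using b by (simp add: field_simps)
qed

theorem lemma3:
  fixes n :: nat and A D \<sigma> :: "real mat" and lam alpha delta :: "real list"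
  assumes n: "n \<ge> 1"
    and A: "A \<in> carrier_mat (2*n) (2*n)"
    and D: "D \<in> carrier_mat (2*n) (2*n)"
    and \<sigma>: "\<sigma> \<in> carrier_mat (2*n) (2*n)"
    and Aneg: "real_negdef (A + A\<^sup>T)"
    and Dsym: "D\<^sup>T = D"
    and Dpos: "\<forall>e. eigenvalue D e \<longrightarrow> e > 0"
    and \<sigma>sym: "\<sigma>\<^sup>T = \<sigma>"
    and cm: "complex_psd (map_mat complex_of_real \<sigma> + \<i> \<cdot>\<^sub>m map_mat complex_of_real (Omega n))"
    and cond: "real_psd (A * \<sigma> + \<sigma> * A\<^sup>T + D)"
    and lam: "eigenvalue_list \<sigma> lam" "sorted_wrt (\<ge>) lam"
    and alpha: "eigenvalue_list (- (A + A\<^sup>T)) alpha" "sorted alpha"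
    and delta: "eigenvalue_list D delta" "sorted_wrt (\<ge>) delta"
  shows "lam ! 0 * lam ! 1 \<le> (delta ! 0 + delta ! 1)\<^sup>2 / (4 * (alpha ! 0) * (alpha ! 1))"
proof -
  define M where "M = - (A + A\<^sup>T)"
  have N: "2 \<le> 2 * n" using n by simp
  have M: "M \<in> carrier_mat (2*n) (2*n)" using A by (simp add: M_def)
  have Msym: "M\<^sup>T = M" unfolding M_def by (rule eq_matI) (use A in auto)
  have Mpos: "\<forall>v \<in> carrier_vec (2*n). v \<noteq> 0\<^sub>v (2*n) \<longrightarrow> 0 < v \<bullet> (M *\<^sub>v v)"
    using Aneg A unfolding real_negdef_def M_def by auto
  obtain v1 v2 where v: "v1 \<in> carrier_vec (2*n)" "v2 \<in> carrier_vec (2*n)"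
    and vv: "v1 \<bullet> v1 = 1" "v2 \<bullet> v2 = 1" "v1 \<bullet> v2 = 0"
    and ev: "\<sigma> *\<^sub>v v1 = lam ! 0 \<cdot>\<^sub>v v1" "\<sigma> *\<^sub>v v2 = lam ! 1 \<cdot>\<^sub>v v2"
    using top_two_orthonormal_eigenvectors[OF \<sigma> \<sigma>sym lam(1) N] by blast
  have \<sigma>_psd: "0 \<le> v \<bullet> (\<sigma> *\<^sub>v v)" if "v \<in> carrier_vec (2*n)" for v
    by (rule complex_psd_imp_real_part_psd[OF \<sigma> _ cm that]) (simp add: Omega_def)
  have lam_nonneg: "0 \<le> lam ! 0" "0 \<le> lam ! 1"
    using \<sigma>_psd[OF v(1)] \<sigma>_psd[OF v(2)] ev v vv by simp_all
  have "lam ! 0 * (v1 \<bullet> (M *\<^sub>v v1)) + lam ! 1 * (v2 \<bullet> (M *\<^sub>v v2)) \<le> v1 \<bullet> (D *\<^sub>v v1) + v2 \<bullet> (D *\<^sub>v v2)"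
    using lyapunov_eigenvector_bound[OF A \<sigma> D \<sigma>sym cond] v ev unfolding M_def by (simp add: add_mono)
  also have "\<dots> \<le> delta ! 0 + delta ! 1"
    by (rule quadratic_form_pair_le_top_two[OF D Dsym delta N v vv])
  finally have weighted_sum: "lam ! 0 * (v1 \<bullet> (M *\<^sub>v v1)) + lam ! 1 * (v2 \<bullet> (M *\<^sub>v v2)) \<le> delta ! 0 + delta ! 1" .
  show ?thesis
  proof (rule product_le_of_weighted_sum_le[OF lam_nonneg _ _ _ _ _ weighted_sum])
    show "alpha ! 0 \<le> v1 \<bullet> (M *\<^sub>v v1)" "alpha ! 0 \<le> v2 \<bullet> (M *\<^sub>v v2)"
      using quadratic_form_ge_least_eigenvalue[OF M Msym alpha[folded M_def]] v vv by auto
    show "alpha ! 0 + alpha ! 1 \<le> v1 \<bullet> (M *\<^sub>v v1) + v2 \<bullet> (M *\<^sub>v v2)"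
      by (rule quadratic_form_pair_ge_bottom_two[OF M Msym alpha[folded M_def] N v vv])
    show "0 < alpha ! 0"
      using eigenvalue_list_pos_if_pos_def[OF M Msym alpha(1)[folded M_def] Mpos] N by simp
    show "alpha ! 0 \<le> alpha ! 1"
      using alpha N M unfolding eigenvalue_list_def M_def by (auto simp: sorted_iff_nth_mono)
  qed
qed

end
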